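(* For the difference module $(\mathscr O_t( *0),\phi_t)$ over itself, one has $\mathrm{Per}(\mathscr O_t( *0))=\mathscr A_{\mathrm{per}}$ as subsheaves of $\widetilde{\mathscr O}$ on $S^1$.
   Context: Let $\mathscr O_t( *0)=\mathbb C\{t\}[t^{-1}]$ with automorphism $\phi_t(f)(t)=f(t/(1+t))$; $s=t^{-1}$. On the circle $S^1$ of directions at $t=0$: $\widetilde{\mathscr O}$ is the sheaf of germs of holomorphic functions on sectors at $t=0$; $\mathscr A^{\leqslant0}$ (resp. $\mathscr A^{<0}$) the subsheaf of functions of moderate growth (resp. rapid decay) as $t\to0$ on closed subsectors; $\widetilde\phi_t$ the automorphism of $\widetilde{\mathscr O}$ given by composition with $t\mapsto t/(1+t)$ (i.e. $s\mapsto s+1$). $\mathscr A^{\leqslant0}_{\mathrm{per}}=\ker(\widetilde\phi_t-\mathrm{id})\cap\mathscr A^{\leqslant0}$, $u=\exp(2\pi\mathrm i s)$, $\mathscr A_{\mathrm{per}}=\sum_{n\in\mathbb Z}u^n\mathscr A^{\leqslant0}_{\mathrm{per}}$. The index sheaf $\mathscr I\subset\widetilde{\mathscr O}$ is the subsheaf of $\mathbb C$-vector spaces whose local sections are locally represented by $\sum_{\ell=1}^m c_\ell t^{-\ell/m}$ ($m\ge1$, $c_\ell\in\mathbb C$, some determination of $t^{1/m}$); for $\mathfrak a\in\mathscr I(U)$ put $\mathscr A^{\leqslant\mathfrak a}=\exp(\mathfrak a)\mathscr A^{\leqslant0}|_U$. For a difference module $(\mathscr M,\psi)$ over $(\mathscr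 O_t( *0),\phi_t)$ (finite-dimensional $\mathscr O_t( *0)$-vector space with additive bijection $\psi$, $\psi(fm)=\phi_t(f)\psi(m)$), let $\widetilde\psi=\widetilde\phi_t\otimes\psi$ on $\widetilde{\mathscr O}\otimes\mathscr M$ (tensor over the constant sheaf $\mathscr O_t( *0)$), let $\mathscr H^0\widetilde{\mathrm{DR}}(\mathscr M)=\ker(\widetilde\psi-\mathrm{id})\subset\widetilde{\mathscr O}\otimes\mathscr M$ and $\mathscr H^0\mathrm{DR}_{\leqslant\mathfrak a}(\mathscr M)=\ker(\widetilde\psi-\mathrm{id})\cap(\mathscr A^{\leqslant\mathfrak a}\otimes\mathscr M)$. Then $\mathrm{Per}(\mathscr M)$ is the unique subsheaf of $\mathscr H^0\widetilde{\mathrm{DR}}(\mathscr M)$ whose restriction to every open $U\subsetneq S^1$ equals $\sum_{\mathfrak a\in\mathscr I(U)}\mathscr H^0\mathrm{DR}_{\leqslant\mathfrak a}(\mathscr M)$. *)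

theory Defs
  imports "HOL-Analysis.Analysis"
begin

text \<open>Directions of the circle S^1 of directions at t = 0 are represented by real angles
  theta.  Open sectors of direction theta, half-opening delta and radius r:\<close>

definition sector :: "real \<Rightarrow> real \<Rightarrow> real \<Rightarrow> complex set" where
  "sector \<theta> \<delta> r = {t. t \<noteq> 0 \<and> norm t < r \<and>
       (\<exists>\<psi>. \<bar>\<psi> - \<theta>\<bar> < \<delta> \<and> t = complex_of_real (norm t) * cis \<psi>)}"

definition germ_eq :: "real \<Rightarrow> (complex \<Rightarrow> complex) \<Rightarrow> (complex \<Rightarrow> complex) \<Rightarrow> bool" where
  "germ_eq \<theta> f g \<longleftrightarrow> (\<exists>\<delta>>0. \<exists>r>0. \<forall>t\<in>sector \<theta> \<delta> r. f t = g t)"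

definition holo_germ :: "real \<Rightarrow> (complex \<Rightarrow> complex) \<Rightarrow> bool" where
  "holo_germ \<theta> f \<longleftrightarrow> (\<exists>\<delta>>0. \<exists>r>0. f holomorphic_on sector \<theta> \<delta> r)"

text \<open>Stalk of A^{<=0} at theta: holomorphic germs of moderate growth.\<close>
definition moderate_germ :: "real \<Rightarrow> (complex \<Rightarrow> complex) \<Rightarrow> bool" where
  "moderate_germ \<theta> f \<longleftrightarrow> (\<exists>\<delta>>0. \<exists>r>0. \<exists>C. \<exists>N::nat.
      f holomorphic_on sector \<theta> \<delta> r \<and> (\<forall>t\<in>sector \<theta> \<delta> r. norm (f t) \<le> C / norm t ^ N))"

definition phi_tilde :: "(complex \<Rightarrow> complex) \<Rightarrow> (complex \<Rightarrow> complex)" where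
  "phi_tilde f = (\<lambda>t. f (t / (1 + t)))"

definition periodic_germ :: "real \<Rightarrow> (complex \<Rightarrow> complex) \<Rightarrow> bool" where
  "periodic_germ \<theta> f \<longleftrightarrow> holo_germ \<theta> f \<and> germ_eq \<theta> (phi_tilde f) f"

text \<open>Stalk of the index sheaf at theta: germs of sum_{l=1}^m c_l t^{-l/m} for some
  determination rho of t^{1/m} on a sector.\<close>
definition index_germ :: "real \<Rightarrow> (complex \<Rightarrow> complex) \<Rightarrow> bool" where
  "index_germ \<theta> a \<longleftrightarrow> (\<exists>\<delta>>0. \<exists>r>0. \<exists>m::nat. \<exists>c::nat \<Rightarrow> complex. \<exists>\<rho>.
      m \<ge> 1 \<and> \<rho> holomorphic_on sector \<theta> \<delta> r \<and>
      (\<forall>t\<in>sector \<theta> \<delta> r. \<rho> t ^ m = t \<and> a t = (\<Sum>l=1..m. c l * inverse (\<rho> t ^ l))))"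

text \<open>Stalk at theta of A^{<=a} = exp(a) A^{<=0}.\<close>
definition A_le_germ :: "real \<Rightarrow> (complex \<Rightarrow> complex) \<Rightarrow> (complex \<Rightarrow> complex) \<Rightarrow> bool" where
  "A_le_germ \<theta> a g \<longleftrightarrow> (\<exists>h. moderate_germ \<theta> h \<and> germ_eq \<theta> g (\<lambda>t. exp (a t) * h t))"

text \<open>For M = O_t(*0) with psi = phi_t, tilde-O \<otimes> M = tilde-O and tilde-psi = tilde-phi_t.
  Stalk at theta of H^0 DR_{<=a}(M) = ker(tilde-psi - id) \<inter> A^{<=a}.\<close>
definition H0DR_le_germ :: "real \<Rightarrow> (complex \<Rightarrow> complex) \<Rightarrow> (complex \<Rightarrow> complex) \<Rightarrow> bool" where
  "H0DR_le_germ \<theta> a g \<longleftrightarrow> periodic_germ \<theta> g \<and> A_le_germ \<theta> a g"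

text \<open>Stalk at theta of Per(O_t(*0)) = sum over a in the index sheaf of H^0 DR_{<=a}.\<close>
definition Per_germ :: "real \<Rightarrow> (complex \<Rightarrow> complex) \<Rightarrow> bool" where
  "Per_germ \<theta> f \<longleftrightarrow> (\<exists>k::nat. \<exists>a g. (\<forall>i<k. index_germ \<theta> (a i) \<and> H0DR_le_germ \<theta> (a i) (g i))
      \<and> germ_eq \<theta> f (\<lambda>t. \<Sum>i<k. g i t))"

definition u_fun :: "complex \<Rightarrow> complex" where
  "u_fun t = exp (2 * of_real pi * \<i> / t)"

definition A_per_le0_germ :: "real \<Rightarrow> (complex \<Rightarrow> complex) \<Rightarrow> bool" where
  "A_per_le0_germ \<theta> h \<longleftrightarrow> periodic_germ \<theta> h \<and> moderate_germ \<theta> h"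

text \<open>Stalk of A_per = sum_n u^n A^{<=0}_per at theta.\<close>
definition A_per_germ :: "real \<Rightarrow> (complex \<Rightarrow> complex) \<Rightarrow> bool" where
  "A_per_germ \<theta> f \<longleftrightarrow> (\<exists>k::nat. \<exists>(n::nat \<Rightarrow> int) h. (\<forall>i<k. A_per_le0_germ \<theta> (h i))
      \<and> germ_eq \<theta> f (\<lambda>t. \<Sum>i<k. u_fun t powi n i * h i t))"

end

theory Submission
  imports Defs "HOL-Complex_Analysis.Complex_Analysis"
begin

text \<open>
  Germs at a direction \<theta> are handled through the filter generated by the sectors at \<theta>.
  A summand of Per is invariant under t \<mapsto> t/(1+t), and since an index a is O(1/|t|) it grows
  at most like exp(K/|t|); so does a finite sum of summands. Conversely u^n h, with h in
  A^{<=0}_per, is a summand of index 2\<pi>i n/t.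
  It remains to write an invariant germ g of growth exp(K/|t|) as an element of A_per.
  If sin \<theta> \<noteq> 0, then |u| = exp(2\<pi> Im t/|t|^2) is exponentially large or small along \<theta>,
  so u^(-n) g is bounded for a suitable n.
  If sin \<theta> = 0, then w = cis \<theta> / t turns g into a 1-periodic function on a cone around the
  positive real axis. It extends to an entire 1-periodic function bounded by C exp(K' |Im w|),
  which by Liouville's theorem is a Laurent polynomial in exp(2\<pi>i w) = u^(\<plusminus>1) with
  constant coefficients.
\<close>

section \<open>Germs at a direction\<close>

definition at_direction :: "real \<Rightarrow> complex filter" where
  "at_direction \<theta> = (INF p\<in>{0<..} \<times> {0<..}. principal (sector \<theta> (fst p) (snd p)))"

lemma sector_mono: "\<delta>' \<le> \<delta> \<Longrightarrow> r' \<le> r \<Longrightarrow> sector \<theta> \<delta>' r' \<subseteq> sector \<theta> \<delta> r"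
  unfolding sector_def by force

lemma eventually_at_direction:
  "eventually P (at_direction \<theta>) \<longleftrightarrow> (\<exists>\<delta>>0. \<exists>r>0. \<forall>t\<in>sector \<theta> \<delta> r. P t)"
  unfolding at_direction_def
proof (subst eventually_INF_base)
  fix a b :: "real \<times> real" assume "a \<in> {0<..} \<times> {0<..}" "b \<in> {0<..} \<times> {0<..}"
  then show "\<exists>x\<in>{0<..} \<times> {0<..}. principal (sector \<theta> (fst x) (snd x))
      \<le> inf (principal (sector \<theta> (fst a) (snd a))) (principal (sector \<theta> (fst b) (snd b)))"
    unfolding inf_principal principal_le_iff
    by (intro bexI[of _ "(min (fst a) (fst b), min (snd a) (snd b))"]) (auto simp: sector_mono)
qed (auto simp: eventually_principal)

lemma norm_cis_diff_le: "norm (cis a - cis b) \<le> \<bar>a - b\<bar>"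
proof -
  have "sin ((b - a) / 2) = - sin ((a - b) / 2)"
    by (metis minus_diff_eq minus_divide_left sin_minus)
  then have "cis a - cis b = 2 * sin ((a - b) / 2) * (\<i> * cis ((a + b) / 2))"
    by (simp add: complex_eq_iff sin_diff_sin cos_diff_cos algebra_simps)
  then have "norm (cis a - cis b) = 2 * \<bar>sin ((a - b) / 2)\<bar>"
    by (simp add: norm_mult)
  also have "\<dots> \<le> \<bar>a - b\<bar>"
    using abs_sin_x_le_abs_x[of "(a - b) / 2"] by simp
  finally show ?thesis .
qed

lemma in_sectorD:
  assumes "t \<in> sector \<theta> \<delta> r"
  shows "t \<noteq> 0" "norm t < r" "norm (sgn t - cis \<theta>) < \<delta>"
proof -
  from assms obtain \<psi> where t: "t \<noteq> 0" "norm t < r" "\<bar>\<psi> - \<theta>\<bar> < \<delta>"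
      "t = of_real (norm t) * cis \<psi>"
    unfolding sector_def by blast
  then have "sgn t = cis \<psi>"
    by (metis sgn_eq nonzero_mult_div_cancel_left norm_eq_zero of_real_eq_0_iff)
  then show "norm (sgn t - cis \<theta>) < \<delta>"
    using t(3) norm_cis_diff_le[of \<psi> \<theta>] by simp
  show "t \<noteq> 0" "norm t < r" using t by blast+
qed

lemma in_sectorI:
  assumes "t \<noteq> 0" "norm t < r" "\<bar>Arg (t / cis \<theta>)\<bar> < \<delta>"
  shows "t \<in> sector \<theta> \<delta> r"
proof -
  have "t / cis \<theta> = of_real (norm t) * cis (Arg (t / cis \<theta>))"
    using rcis_cmod_Arg[of "t / cis \<theta>"] by (simp add: rcis_def norm_divide)
  then have "t = of_real (norm t) * cis (Arg (t / cis \<theta>)) * cis \<theta>"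
    by (simp add: divide_eq_eq)
  then have polar: "t = of_real (norm t) * cis (\<theta> + Arg (t / cis \<theta>))"
    by (simp only: mult.assoc cis_mult add.commute)
  show ?thesis
    unfolding sector_def
    by (intro CollectI conjI exI[of _ "\<theta> + Arg (t / cis \<theta>)"] polar) (use assms in simp_all)
qed

lemma eventually_at_direction_norm_less:
  "r > 0 \<Longrightarrow> eventually (\<lambda>t. t \<noteq> 0 \<and> norm t < r) (at_direction \<theta>)"
  unfolding eventually_at_direction using in_sectorD by blast

lemma eventually_at_direction_sgn:
  "e > 0 \<Longrightarrow> eventually (\<lambda>t. norm (sgn t - cis \<theta>) < e) (at_direction \<theta>)"
  unfolding eventually_at_direction using in_sectorD zero_less_one by blast

lemma germ_eq_iff_eventually: "germ_eq \<theta> f g \<longleftrightarrow> eventually (\<lambda>t. f t = g t) (at_direction \<theta>)"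
  unfolding germ_eq_def eventually_at_direction ..

lemma holo_germ_iff:
  "holo_germ \<theta> f \<longleftrightarrow> (\<exists>S. eventually (\<lambda>t. t \<in> S) (at_direction \<theta>) \<and> f holomorphic_on S)"
  unfolding holo_germ_def eventually_at_direction
  by (metis holomorphic_on_subset subsetI)

lemma holo_germ_eventually:
  assumes "holo_germ \<theta> f" "eventually P (at_direction \<theta>)"
  obtains \<delta> r where "\<delta> > 0" "r > 0" "f holomorphic_on sector \<theta> \<delta> r" "\<And>t. t \<in> sector \<theta> \<delta> r \<Longrightarrow> P t"
proof -
  from assms(1) obtain S where S: "eventually (\<lambda>t. t \<in> S) (at_direction \<theta>)" "f holomorphic_on S"
    unfolding holo_germ_iff by blast
  from eventually_conj[OF S(1) assms(2)] obtain \<delta> r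
    where "\<delta> > 0" "r > 0" "\<forall>t\<in>sector \<theta> \<delta> r. t \<in> S \<and> P t"
    unfolding eventually_at_direction by blast
  with holomorphic_on_subset[OF S(2)] show thesis
    by (intro that[of \<delta> r]) auto
qed

lemma holo_germ_common:
  assumes "holo_germ \<theta> f" "holo_germ \<theta> g"
  obtains S where "eventually (\<lambda>t. t \<in> S) (at_direction \<theta>)" "f holomorphic_on S" "g holomorphic_on S"
proof -
  from assms obtain S T where S: "eventually (\<lambda>t. t \<in> S) (at_direction \<theta>)" "f holomorphic_on S"
    and T: "eventually (\<lambda>t. t \<in> T) (at_direction \<theta>)" "g holomorphic_on T"
    unfolding holo_germ_iff by blast
  show thesis
  proof (rule that[of "S \<inter> T"])
    show "eventually (\<lambda>t. t \<in> S \<inter> T) (at_direction \<theta>)"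
      using eventually_conj[OF S(1) T(1)] by simp
  qed (use holomorphic_on_subset[OF S(2)] holomorphic_on_subset[OF T(2)] in auto)
qed

lemma holo_germ_add: "holo_germ \<theta> f \<Longrightarrow> holo_germ \<theta> g \<Longrightarrow> holo_germ \<theta> (\<lambda>t. f t + g t)"
  by (erule (1) holo_germ_common) (auto simp: holo_germ_iff intro: holomorphic_intros)

lemma holo_germ_mult: "holo_germ \<theta> f \<Longrightarrow> holo_germ \<theta> g \<Longrightarrow> holo_germ \<theta> (\<lambda>t. f t * g t)"
  by (erule (1) holo_germ_common) (auto simp: holo_germ_iff intro: holomorphic_intros)

lemma holo_germ_if_holomorphic_off_0: "(\<And>S. 0 \<notin> S \<Longrightarrow> f holomorphic_on S) \<Longrightarrow> holo_germ \<theta> f"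
  unfolding holo_germ_def using in_sectorD(1) by (metis zero_less_one)

lemma periodic_germ_iff:
  "periodic_germ \<theta> f \<longleftrightarrow> holo_germ \<theta> f \<and> eventually (\<lambda>t. f (t / (1 + t)) = f t) (at_direction \<theta>)"
  unfolding periodic_germ_def germ_eq_iff_eventually phi_tilde_def ..

lemma periodic_germ_add:
  "periodic_germ \<theta> f \<Longrightarrow> periodic_germ \<theta> g \<Longrightarrow> periodic_germ \<theta> (\<lambda>t. f t + g t)"
  unfolding periodic_germ_iff by (auto intro: holo_germ_add elim: eventually_elim2)

lemma periodic_germ_mult:
  "periodic_germ \<theta> f \<Longrightarrow> periodic_germ \<theta> g \<Longrightarrow> periodic_germ \<theta> (\<lambda>t. f t * g t)"
  unfolding periodic_germ_iff by (auto intro: holo_germ_mult elim: eventually_elim2)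

lemma periodic_germ_sum:
  "(\<And>i. i \<in> I \<Longrightarrow> periodic_germ \<theta> (g i)) \<Longrightarrow> periodic_germ \<theta> (\<lambda>t. \<Sum>i\<in>I. g i t)"
proof (induction I rule: infinite_finite_induct)
  case (insert i I)
  then show ?case by (simp add: periodic_germ_add)
qed (auto simp: periodic_germ_iff holo_germ_if_holomorphic_off_0)

lemma moderate_germ_iff:
  "moderate_germ \<theta> f \<longleftrightarrow>
     holo_germ \<theta> f \<and> (\<exists>C N. eventually (\<lambda>t. norm (f t) \<le> C / norm t ^ N) (at_direction \<theta>))"
proof
  assume "moderate_germ \<theta> f"
  then show "holo_germ \<theta> f \<and> (\<exists>C N. eventually (\<lambda>t. norm (f t) \<le> C / norm t ^ N) (at_direction \<theta>))"
    unfolding moderate_germ_def holo_germ_def eventually_at_direction by blast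
next
  assume "holo_germ \<theta> f \<and> (\<exists>C N. eventually (\<lambda>t. norm (f t) \<le> C / norm t ^ N) (at_direction \<theta>))"
  then obtain C N where "holo_germ \<theta> f" "eventually (\<lambda>t. norm (f t) \<le> C / norm t ^ N) (at_direction \<theta>)"
    by blast
  then show "moderate_germ \<theta> f"
  proof (rule holo_germ_eventually)
    fix \<delta> r assume "\<delta> > 0" "r > 0" "f holomorphic_on sector \<theta> \<delta> r"
      "\<And>t. t \<in> sector \<theta> \<delta> r \<Longrightarrow> norm (f t) \<le> C / norm t ^ N"
    then show "moderate_germ \<theta> f"
      unfolding moderate_germ_def by blast
  qed
qed

lemma u_fun_shift: "u_fun (t / (1 + t)) = u_fun t"
proof (cases "t = 0 \<or> t = -1")
  case True
  then show ?thesis by (auto simp: u_fun_def exp_minus)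
next
  case False
  then have "2 * of_real pi * \<i> / (t / (1 + t)) = 2 * of_real pi * \<i> / t + 2 * of_real pi * \<i>"
    by (auto simp: field_simps add_eq_0_iff)
  then show ?thesis unfolding u_fun_def by (simp add: exp_add)
qed

lemma u_fun_power_int: "u_fun t powi n = exp (of_int n * (2 * of_real pi * \<i> / t))"
  unfolding u_fun_def by (simp add: exp_power_int)

lemma norm_u_fun_power_int: "norm (u_fun t powi n) = exp (of_int n * 2 * pi * Im t / norm t ^ 2)"
  unfolding u_fun_power_int norm_exp_eq_Re
  by (simp add: Re_divide cmod_power2)

lemma periodic_germ_u_fun_power_int: "periodic_germ \<theta> (\<lambda>t. u_fun t powi n)"
  unfolding periodic_germ_iff u_fun_shift
  by (auto intro!: holo_germ_if_holomorphic_off_0 holomorphic_intros simp: u_fun_power_int)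

lemma periodic_germ_const: "periodic_germ \<theta> (\<lambda>_. c)"
  by (simp add: periodic_germ_iff holo_germ_if_holomorphic_off_0)

section \<open>Exponential growth and the index sheaf\<close>

definition exp_growth_germ :: "real \<Rightarrow> (complex \<Rightarrow> complex) \<Rightarrow> bool" where
  "exp_growth_germ \<theta> f \<longleftrightarrow>
     (\<exists>C\<ge>0. \<exists>K\<ge>0. eventually (\<lambda>t. norm (f t) \<le> C * exp (K / norm t)) (at_direction \<theta>))"

lemma exp_growth_germI:
  "C \<ge> 0 \<Longrightarrow> K \<ge> 0 \<Longrightarrow> eventually (\<lambda>t. norm (f t) \<le> C * exp (K / norm t)) (at_direction \<theta>) \<Longrightarrow>
    exp_growth_germ \<theta> f"
  unfolding exp_growth_germ_def by blast

lemma exp_growth_germ_cong: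
  assumes "eventually (\<lambda>t. f t = g t) (at_direction \<theta>)" "exp_growth_germ \<theta> g"
  shows "exp_growth_germ \<theta> f"
proof -
  from assms(2) obtain C K where "C \<ge> 0" "K \<ge> 0"
    and bound: "eventually (\<lambda>t. norm (g t) \<le> C * exp (K / norm t)) (at_direction \<theta>)"
    unfolding exp_growth_germ_def by blast
  have "eventually (\<lambda>t. norm (f t) \<le> C * exp (K / norm t)) (at_direction \<theta>)"
    using assms(1) bound by eventually_elim simp
  with \<open>C \<ge> 0\<close> \<open>K \<ge> 0\<close> show ?thesis
    by (rule exp_growth_germI)
qed

lemma exp_growth_germ_add:
  assumes "exp_growth_germ \<theta> f" "exp_growth_germ \<theta> g"
  shows "exp_growth_germ \<theta> (\<lambda>t. f t + g t)"
proof -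
  from assms obtain C1 K1 C2 K2 where "C1 \<ge> 0" "K1 \<ge> 0" "C2 \<ge> 0" "K2 \<ge> 0"
    and f: "eventually (\<lambda>t. norm (f t) \<le> C1 * exp (K1 / norm t)) (at_direction \<theta>)"
    and g: "eventually (\<lambda>t. norm (g t) \<le> C2 * exp (K2 / norm t)) (at_direction \<theta>)"
    unfolding exp_growth_germ_def by blast
  have "eventually (\<lambda>t. norm (f t + g t) \<le> (C1 + C2) * exp ((K1 + K2) / norm t)) (at_direction \<theta>)"
    using f g
  proof eventually_elim
    case (elim t)
    moreover have "exp (K1 / norm t) \<le> exp ((K1 + K2) / norm t)"
      and "exp (K2 / norm t) \<le> exp ((K1 + K2) / norm t)"
      using \<open>K1 \<ge> 0\<close> \<open>K2 \<ge> 0\<close> by (simp_all add: divide_right_mono)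
    ultimately have "norm (f t) + norm (g t)
        \<le> C1 * exp ((K1 + K2) / norm t) + C2 * exp ((K1 + K2) / norm t)"
      using \<open>C1 \<ge> 0\<close> \<open>C2 \<ge> 0\<close> by (meson add_mono mult_left_mono order_trans)
    then show ?case
      using norm_triangle_ineq[of "f t" "g t"] by (simp add: distrib_right)
  qed
  with \<open>C1 \<ge> 0\<close> \<open>K1 \<ge> 0\<close> \<open>C2 \<ge> 0\<close> \<open>K2 \<ge> 0\<close> show ?thesis
    by (intro exp_growth_germI) auto
qed

lemma exp_growth_germ_sum:
  "(\<And>i. i \<in> I \<Longrightarrow> exp_growth_germ \<theta> (g i)) \<Longrightarrow> exp_growth_germ \<theta> (\<lambda>t. \<Sum>i\<in>I. g i t)"
proof (induction I rule: infinite_finite_induct)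
  case (insert i I)
  then show ?case by (simp add: exp_growth_germ_add)
qed (auto simp: exp_growth_germ_def intro!: exI[where x = "0::real"])

lemma exp_growth_germ_mult:
  assumes "exp_growth_germ \<theta> f" "exp_growth_germ \<theta> g"
  shows "exp_growth_germ \<theta> (\<lambda>t. f t * g t)"
proof -
  from assms obtain C1 K1 C2 K2 where "C1 \<ge> 0" "K1 \<ge> 0" "C2 \<ge> 0" "K2 \<ge> 0"
    and f: "eventually (\<lambda>t. norm (f t) \<le> C1 * exp (K1 / norm t)) (at_direction \<theta>)"
    and g: "eventually (\<lambda>t. norm (g t) \<le> C2 * exp (K2 / norm t)) (at_direction \<theta>)"
    unfolding exp_growth_germ_def by blast
  have "eventually (\<lambda>t. norm (f t * g t) \<le> (C1 * C2) * exp ((K1 + K2) / norm t)) (at_direction \<theta>)"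
    using f g
  proof eventually_elim
    case (elim t)
    then have "norm (f t * g t) \<le> (C1 * exp (K1 / norm t)) * (C2 * exp (K2 / norm t))"
      unfolding norm_mult using \<open>C1 \<ge> 0\<close> by (intro mult_mono) auto
    then show ?case
      by (simp add: add_divide_distrib exp_add mult_ac)
  qed
  with \<open>C1 \<ge> 0\<close> \<open>K1 \<ge> 0\<close> \<open>C2 \<ge> 0\<close> \<open>K2 \<ge> 0\<close> show ?thesis
    by (intro exp_growth_germI) auto
qed

lemma inverse_power_le_exp: "x > 0 \<Longrightarrow> 1 / x ^ N \<le> exp (real N / x)"
proof -
  assume "x > 0"
  have "1 / x \<le> exp (1 / x)"
    using exp_ge_add_one_self[of "1 / x"] by linarith
  then have "(1 / x) ^ N \<le> exp (1 / x) ^ N"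
    using \<open>x > 0\<close> by (intro power_mono) auto
  then show ?thesis
    by (simp add: power_one_over flip: exp_of_nat_mult)
qed

lemma moderate_germ_imp_exp_growth_germ:
  assumes "moderate_germ \<theta> f"
  shows "exp_growth_germ \<theta> f"
proof -
  from assms obtain C N where "eventually (\<lambda>t. norm (f t) \<le> C / norm t ^ N) (at_direction \<theta>)"
    unfolding moderate_germ_iff by blast
  with eventually_at_direction_norm_less[OF zero_less_one]
  have "eventually (\<lambda>t. norm (f t) \<le> \<bar>C\<bar> * exp (real N / norm t)) (at_direction \<theta>)"
  proof eventually_elim
    case (elim t)
    then have "norm (f t) \<le> \<bar>C\<bar> * (1 / norm t ^ N)"
      using divide_right_mono[OF abs_ge_self[of C], of "norm t ^ N"] by simp
    also have "\<dots> \<le> \<bar>C\<bar> * exp (real N / norm t)"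
      using elim by (intro mult_left_mono inverse_power_le_exp) auto
    finally show ?case .
  qed
  then show ?thesis
    by (intro exp_growth_germI) auto
qed

lemma exp_growth_germ_exp:
  assumes "K \<ge> 0" "eventually (\<lambda>t. norm (a t) \<le> K / norm t) (at_direction \<theta>)"
  shows "exp_growth_germ \<theta> (\<lambda>t. exp (a t))"
  unfolding exp_growth_germ_def
proof (intro exI conjI)
  show "eventually (\<lambda>t. norm (exp (a t)) \<le> 1 * exp (K / norm t)) (at_direction \<theta>)"
    using assms(2) by eventually_elim (auto intro: order_trans[OF complex_Re_le_cmod])
qed (use assms(1) in auto)

lemma norm_inverse_power_mono:
  fixes \<rho> :: "'a::real_normed_div_algebra"
  assumes "norm \<rho> \<le> 1" "\<rho> \<noteq> 0" "l \<le> m"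
  shows "norm (inverse (\<rho> ^ l)) \<le> norm (inverse (\<rho> ^ m))"
proof -
  have "norm \<rho> ^ m \<le> norm \<rho> ^ l"
    using assms by (intro power_decreasing) auto
  then show ?thesis
    using assms(2) by (simp add: norm_inverse norm_power le_imp_inverse_le)
qed

lemma index_germ_norm_bound:
  assumes "index_germ \<theta> a"
  shows "\<exists>K\<ge>0. eventually (\<lambda>t. norm (a t) \<le> K / norm t) (at_direction \<theta>)"
proof -
  from assms obtain \<delta> r m c \<rho> where "\<delta> > 0" "r > 0" "m \<ge> 1"
    and \<rho>: "\<forall>t\<in>sector \<theta> \<delta> r. \<rho> t ^ m = t \<and> a t = (\<Sum>l=1..m. c l * inverse (\<rho> t ^ l))"
    unfolding index_germ_def by blast
  define K where "K = (\<Sum>l=1..m. norm (c l))"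
  have "eventually (\<lambda>t. \<rho> t ^ m = t \<and> a t = (\<Sum>l=1..m. c l * inverse (\<rho> t ^ l))) (at_direction \<theta>)"
    unfolding eventually_at_direction using \<open>\<delta> > 0\<close> \<open>r > 0\<close> \<rho> by blast
  with eventually_at_direction_norm_less[OF zero_less_one]
  have "eventually (\<lambda>t. norm (a t) \<le> K / norm t) (at_direction \<theta>)"
  proof eventually_elim
    case (elim t)
    then have root: "\<rho> t ^ m = t" "t \<noteq> 0" by auto
    then have "\<rho> t \<noteq> 0"
      using \<open>m \<ge> 1\<close> by (metis not_one_le_zero power_0_left)
    have "norm (\<rho> t) ^ m < 1 ^ m"
      using elim root by (simp flip: norm_power)
    then have "norm (\<rho> t) \<le> 1"
      using power_less_imp_less_base by fastforce
    have "norm (a t) \<le> (\<Sum>l=1..m. norm (c l) * norm (inverse (\<rho> t ^ l)))"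
      using elim by (simp add: norm_mult order_trans[OF norm_sum])
    also have "\<dots> \<le> (\<Sum>l=1..m. norm (c l) * norm (inverse (\<rho> t ^ m)))"
      using \<open>norm (\<rho> t) \<le> 1\<close> \<open>\<rho> t \<noteq> 0\<close>
      by (intro sum_mono mult_left_mono norm_inverse_power_mono) auto
    also have "\<dots> = K / norm t"
      by (simp add: K_def root norm_inverse divide_inverse sum_distrib_right)
    finally show ?case .
  qed
  moreover have "K \<ge> 0"
    unfolding K_def by (simp add: sum_nonneg)
  ultimately show ?thesis by blast
qed

lemma H0DR_le_germ_imp_exp_growth_germ:
  assumes "index_germ \<theta> a" "H0DR_le_germ \<theta> a g"
  shows "exp_growth_germ \<theta> g"
proof -
  from assms(2) obtain h where "moderate_germ \<theta> h"
    and g: "eventually (\<lambda>t. g t = exp (a t) * h t) (at_direction \<theta>)"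
    unfolding H0DR_le_germ_def A_le_germ_def germ_eq_iff_eventually by blast
  obtain K where "K \<ge> 0" "eventually (\<lambda>t. norm (a t) \<le> K / norm t) (at_direction \<theta>)"
    using index_germ_norm_bound[OF assms(1)] by blast
  then have "exp_growth_germ \<theta> (\<lambda>t. exp (a t) * h t)"
    by (intro exp_growth_germ_mult exp_growth_germ_exp moderate_germ_imp_exp_growth_germ
        \<open>moderate_germ \<theta> h\<close>)
  with g show ?thesis
    by (rule exp_growth_germ_cong)
qed

lemma index_germ_inverse: "index_germ \<theta> (\<lambda>t. c * inverse t)"
  unfolding index_germ_def
  by (intro exI[of _ "1::real"] exI[of _ "1::nat"] exI[of _ "\<lambda>_. c"] exI[of _ "\<lambda>t. t"] conjI ballI)
    auto

lemma H0DR_le_germ_u_fun_power_int: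
  assumes "A_per_le0_germ \<theta> h"
  shows "H0DR_le_germ \<theta> (\<lambda>t. of_int n * (2 * of_real pi * \<i>) * inverse t) (\<lambda>t. u_fun t powi n * h t)"
  unfolding H0DR_le_germ_def A_le_germ_def
proof (intro conjI exI)
  show "periodic_germ \<theta> (\<lambda>t. u_fun t powi n * h t)"
    using assms unfolding A_per_le0_germ_def
    by (intro periodic_germ_mult periodic_germ_u_fun_power_int) auto
  show "moderate_germ \<theta> h"
    using assms unfolding A_per_le0_germ_def by auto
  show "germ_eq \<theta> (\<lambda>t. u_fun t powi n * h t) (\<lambda>t. exp (of_int n * (2 * of_real pi * \<i>) * inverse t) * h t)"
    unfolding germ_eq_iff_eventually u_fun_power_int by (simp add: divide_inverse mult.assoc)
qed

lemma A_per_germ_imp_Per_germ: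
  assumes "A_per_germ \<theta> f"
  shows "Per_germ \<theta> f"
proof -
  from assms obtain k :: nat and n h where "\<forall>i<k. A_per_le0_germ \<theta> (h i)"
    and "germ_eq \<theta> f (\<lambda>t. \<Sum>i<k. u_fun t powi n i * h i t)"
    unfolding A_per_germ_def by blast
  then show ?thesis
    unfolding Per_germ_def
    by (intro exI[of _ k] exI[of _ "\<lambda>i t. of_int (n i) * (2 * of_real pi * \<i>) * inverse t"]
        exI[of _ "\<lambda>i t. u_fun t powi n i * h i t"])
      (simp add: index_germ_inverse H0DR_le_germ_u_fun_power_int)
qed

lemma A_per_germ_cong:
  assumes "eventually (\<lambda>t. f t = g t) (at_direction \<theta>)" "A_per_germ \<theta> g"
  shows "A_per_germ \<theta> f"
proof -
  from assms(2) obtain k :: nat and n h where "\<forall>i<k. A_per_le0_germ \<theta> (h i)"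
    and "eventually (\<lambda>t. g t = (\<Sum>i<k. u_fun t powi n i * h i t)) (at_direction \<theta>)"
    unfolding A_per_germ_def germ_eq_iff_eventually by blast
  moreover from this(2) assms(1)
  have "eventually (\<lambda>t. f t = (\<Sum>i<k. u_fun t powi n i * h i t)) (at_direction \<theta>)"
    by eventually_elim simp
  ultimately show ?thesis
    unfolding A_per_germ_def germ_eq_iff_eventually by blast
qed

section \<open>Non-real directions\<close>

lemma eventually_at_direction_near_ray:
  assumes "e > 0"
  shows "eventually (\<lambda>t. norm (t - of_real (norm t) * cis \<theta>) < e * norm t) (at_direction \<theta>)"
  using eventually_at_direction_sgn[OF assms] eventually_at_direction_norm_less[OF zero_less_one]
proof eventually_elim
  case (elim t)
  have "t - of_real (norm t) * cis \<theta> = of_real (norm t) * (sgn t - cis \<theta>)"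
    using elim by (simp add: sgn_eq algebra_simps)
  then show ?case
    using elim by (simp add: norm_mult)
qed

lemma A_per_germ_single:
  "A_per_le0_germ \<theta> h \<Longrightarrow> A_per_germ \<theta> (\<lambda>t. u_fun t powi n * h t)"
  unfolding A_per_germ_def germ_eq_iff_eventually
  by (intro exI[of _ "1::nat"] exI[of _ "\<lambda>_. n"] exI[of _ "\<lambda>_. h"]) simp

lemma eventually_sgn_sin_mult_Im_ge:
  assumes "sin \<theta> \<noteq> 0"
  shows "eventually (\<lambda>t. \<bar>sin \<theta>\<bar> / 2 * norm t \<le> sgn (sin \<theta>) * Im t) (at_direction \<theta>)"
proof -
  have "\<bar>sin \<theta>\<bar> / 2 > 0"
    using assms by simp
  from eventually_at_direction_near_ray[OF this, of \<theta>] show ?thesis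
  proof eventually_elim
    case (elim t)
    then have "\<bar>Im t - sin \<theta> * norm t\<bar> < \<bar>sin \<theta>\<bar> / 2 * norm t"
      using abs_Im_le_cmod[of "t - of_real (norm t) * cis \<theta>"] by (simp add: mult.commute)
    moreover have "sgn (sin \<theta>) * Im t = sgn (sin \<theta>) * (Im t - sin \<theta> * norm t) + \<bar>sin \<theta>\<bar> * norm t"
      by (simp add: algebra_simps abs_sgn)
    moreover have "- \<bar>Im t - sin \<theta> * norm t\<bar> \<le> sgn (sin \<theta>) * (Im t - sin \<theta> * norm t)"
      using assms by (cases "sin \<theta> > 0") auto
    ultimately show ?case
      by linarith
  qed
qed

lemma eventually_norm_u_fun_power_int_le:
  fixes M :: nat
  assumes "sin \<theta> \<noteq> 0" "of_int \<sigma> = sgn (sin \<theta>)"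
  shows "eventually (\<lambda>t. norm (u_fun t powi (- \<sigma> * M)) \<le> exp (- (pi * \<bar>sin \<theta>\<bar> * M) / norm t))
    (at_direction \<theta>)"
  using eventually_sgn_sin_mult_Im_ge[OF assms(1)] eventually_at_direction_norm_less[OF zero_less_one]
proof eventually_elim
  case (elim t)
  then have "real M * (\<bar>sin \<theta>\<bar> / 2 * norm t) \<le> real M * (of_int \<sigma> * Im t)"
    using assms(2) by (intro mult_left_mono) auto
  then have "of_int (- \<sigma> * M) * 2 * pi * Im t / norm t ^ 2
      \<le> - (2 * pi / norm t ^ 2) * (real M * (\<bar>sin \<theta>\<bar> / 2 * norm t))"
    by (simp add: algebra_simps divide_right_mono)
  also have "\<dots> = - (pi * \<bar>sin \<theta>\<bar> * M) / norm t"
    using elim by (simp add: power2_eq_square field_simps)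
  finally show ?case
    unfolding norm_u_fun_power_int by simp
qed

lemma A_per_germ_nonreal_direction:
  assumes "sin \<theta> \<noteq> 0" "periodic_germ \<theta> g" "exp_growth_germ \<theta> g"
  shows "A_per_germ \<theta> g"
proof -
  define \<sigma> :: int where "\<sigma> = (if sin \<theta> > 0 then 1 else -1)"
  have \<sigma>: "of_int \<sigma> = sgn (sin \<theta>)"
    using assms(1) by (simp add: \<sigma>_def sgn_if)
  obtain C K where "C \<ge> 0" "K \<ge> 0"
    and bound: "eventually (\<lambda>t. norm (g t) \<le> C * exp (K / norm t)) (at_direction \<theta>)"
    using assms(3) unfolding exp_growth_germ_def by blast
  define M :: nat where "M = nat \<lceil>K / (pi * \<bar>sin \<theta>\<bar>)\<rceil>"
  have "K / (pi * \<bar>sin \<theta>\<bar>) \<le> M"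
    unfolding M_def by linarith
  then have "K \<le> pi * \<bar>sin \<theta>\<bar> * M"
    using assms(1) pi_gt_zero by (simp add: divide_le_eq mult_ac)
  define h where "h t = u_fun t powi (- \<sigma> * M) * g t" for t
  have "eventually (\<lambda>t. norm (h t) \<le> C) (at_direction \<theta>)"
    using bound eventually_norm_u_fun_power_int_le[OF assms(1) \<sigma>, of M]
  proof eventually_elim
    case (elim t)
    have "- (pi * \<bar>sin \<theta>\<bar> * M) / norm t \<le> - K / norm t"
      using \<open>K \<le> pi * \<bar>sin \<theta>\<bar> * M\<close> by (simp add: divide_right_mono)
    then have "norm (u_fun t powi (- \<sigma> * M)) \<le> exp (- K / norm t)"
      using elim(2) by (meson exp_le_cancel_iff order_trans)
    then have "norm (h t) \<le> exp (- K / norm t) * (C * exp (K / norm t))"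
      unfolding h_def norm_mult using elim(1) by (intro mult_mono) auto
    then show ?case
      by (simp add: exp_minus field_simps)
  qed
  moreover have "periodic_germ \<theta> h"
    unfolding h_def by (intro periodic_germ_mult periodic_germ_u_fun_power_int assms(2))
  ultimately have "A_per_le0_germ \<theta> h"
    unfolding A_per_le0_germ_def moderate_germ_iff periodic_germ_iff
    by (auto intro!: exI[of _ C] exI[of _ "0::nat"])
  then have "A_per_germ \<theta> (\<lambda>t. u_fun t powi (\<sigma> * M) * h t)"
    by (rule A_per_germ_single)
  moreover have "u_fun t powi (\<sigma> * M) * h t = g t" for t
    unfolding h_def u_fun_power_int by (simp add: mult.assoc flip: exp_add)
  ultimately show ?thesis
    by simp
qed

section \<open>Periodic functions on a right cone\<close>

definition right_cone :: "real \<Rightarrow> real \<Rightarrow> complex set" where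
  "right_cone R c = {w. R < Re w \<and> \<bar>Im w\<bar> < c * Re w}"

lemma right_cone_add_nat:
  assumes "c \<ge> 0" "w \<in> right_cone R c"
  shows "w + of_nat n \<in> right_cone R c"
proof -
  have "c * Re w \<le> c * (Re w + n)"
    using assms(1) by (simp add: mult_left_mono)
  then show ?thesis
    using assms(2) unfolding right_cone_def by auto
qed

lemma add_nat_in_right_cone:
  assumes "c > 0" "R \<ge> 0" "R + \<bar>Im z\<bar> / c < Re z + n"
  shows "z + of_nat n \<in> right_cone R c"
proof -
  have "\<bar>Im z\<bar> / c < Re z + n"
    using assms(2,3) by linarith
  then have "\<bar>Im z\<bar> < c * (Re z + n)"
    using assms(1) by (simp add: divide_less_eq mult.commute)
  moreover have "R < Re z + n"
    using assms(1,3) by (smt (verit) divide_nonneg_pos)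
  ultimately show ?thesis
    unfolding right_cone_def by simp
qed

lemma periodic_on_right_cone_add_nat:
  assumes "c \<ge> 0" "\<And>w. w \<in> right_cone R c \<Longrightarrow> F (w + 1) = F w" "w \<in> right_cone R c"
  shows "F (w + of_nat n) = F w"
proof (induction n)
  case (Suc n)
  have "F (w + of_nat n + 1) = F (w + of_nat n)"
    using assms right_cone_add_nat by blast
  then show ?case
    using Suc by (simp add: add_ac)
qed simp

lemma periodic_add_int:
  fixes f :: "complex \<Rightarrow> 'a"
  assumes "\<And>z. f (z + 1) = f z"
  shows "f (z + of_int k) = f z"
proof -
  have nat: "f (z + of_nat n) = f z" for z n
  proof (induction n)
    case (Suc n)
    then show ?case
      using assms[of "z + of_nat n"] by (simp add: add_ac)
  qed simp
  show ?thesis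
  proof (cases "k \<ge> 0")
    case True
    then show ?thesis using nat[of z "nat k"] by simp
  next
    case False
    then show ?thesis using nat[of "z + of_int k" "nat (- k)"] by simp
  qed
qed

lemma periodic_on_right_cone_shift_eq:
  assumes "c \<ge> 0" "\<And>w. w \<in> right_cone R c \<Longrightarrow> F (w + 1) = F w"
    and "z + of_nat m \<in> right_cone R c" "z + of_nat n \<in> right_cone R c"
  shows "F (z + of_nat m) = F (z + of_nat n)"
proof -
  have shift: "F (z + of_nat (k + l)) = F (z + of_nat k)" if "z + of_nat k \<in> right_cone R c" for k l
    using periodic_on_right_cone_add_nat[where F = F, OF assms(1,2) that, of l]
    by (simp add: add.assoc)
  show ?thesis
    using shift[OF assms(3), of "n - m"] shift[OF assms(4), of "m - n"] by (cases "m \<le> n") simp_all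
qed

lemma ball_add_nat_in_right_cone:
  assumes "c > 0" "R \<ge> 0"
  obtains n :: nat where "\<And>z. z \<in> ball z0 1 \<Longrightarrow> z + of_nat n \<in> right_cone R c"
proof
  define n where "n = nat \<lceil>R + (\<bar>Im z0\<bar> + 1) / c + \<bar>Re z0\<bar> + 2\<rceil>"
  fix z assume "z \<in> ball z0 1"
  then have "\<bar>Im z\<bar> \<le> \<bar>Im z0\<bar> + 1" "\<bar>Re z\<bar> \<le> \<bar>Re z0\<bar> + 1"
    using abs_Im_le_cmod[of "z - z0"] abs_Re_le_cmod[of "z - z0"]
    by (auto simp: dist_norm norm_minus_commute)
  then have "\<bar>Im z\<bar> / c \<le> (\<bar>Im z0\<bar> + 1) / c"
    using assms(1) by (simp add: divide_right_mono)
  then have "R + \<bar>Im z\<bar> / c < Re z + n"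
    using \<open>\<bar>Re z\<bar> \<le> \<bar>Re z0\<bar> + 1\<close> abs_ge_minus_self[of "Re z"]
      real_nat_ceiling_ge[of "R + (\<bar>Im z0\<bar> + 1) / c + \<bar>Re z0\<bar> + 2"]
    unfolding n_def by linarith
  then show "z + of_nat n \<in> right_cone R c"
    by (rule add_nat_in_right_cone[OF assms])
qed

lemma periodic_extension_from_right_cone:
  assumes "c > 0" "R \<ge> 0" and hol: "F holomorphic_on right_cone R c"
    and per: "\<And>w. w \<in> right_cone R c \<Longrightarrow> F (w + 1) = F w"
  obtains G where "G holomorphic_on UNIV" "\<And>z. G (z + 1) = G z"
    "\<And>w. w \<in> right_cone R c \<Longrightarrow> G w = F w"
proof -
  define W where "W = right_cone R c"
  define G where "G z = F (z + of_nat (SOME n. z + of_nat n \<in> W))" for z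
  have "\<exists>n. z + of_nat n \<in> W" for z
    using ball_add_nat_in_right_cone[OF assms(1,2), of z] unfolding W_def
    by (metis centre_in_ball zero_less_one)
  then have G_eq: "G z = F (z + of_nat n)" if "z + of_nat n \<in> W" for z n
    unfolding G_def W_def
    using periodic_on_right_cone_shift_eq[where F = F, OF less_imp_le[OF assms(1)] per] that
    by (metis W_def someI_ex)
  have "G holomorphic_on ball z0 1" for z0
  proof -
    obtain n where shift_in_W: "\<And>z. z \<in> ball z0 1 \<Longrightarrow> z + of_nat n \<in> W"
      using ball_add_nat_in_right_cone[OF assms(1,2)] unfolding W_def by blast
    then have "(\<lambda>z. F (z + of_nat n)) holomorphic_on ball z0 1"
      using hol unfolding W_def
      by (intro holomorphic_on_compose_gen[of "\<lambda>z. z + of_nat n" _ F, unfolded o_def] holomorphic_intros)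
        auto
    then show ?thesis
      by (rule holomorphic_transform) (simp add: G_eq[OF shift_in_W])
  qed
  then have "G holomorphic_on (\<Union>z0. ball z0 1)"
    by (intro holomorphic_on_UN_open) auto
  moreover have "(\<Union>z0. ball z0 (1::real)) = (UNIV :: complex set)"
    by (auto intro: centre_in_ball[THEN iffD2])
  moreover have "G (z + 1) = G z" for z
  proof -
    obtain n where "z + 1 + of_nat n \<in> W"
      using \<open>\<And>z. \<exists>n. z + of_nat n \<in> W\<close> by blast
    then show ?thesis
      using G_eq[of "z + 1" n] G_eq[of z "n + 1"] by (simp add: add_ac)
  qed
  moreover have "G w = F w" if "w \<in> W" for w
    using G_eq[of w 0] that by simp
  ultimately show thesis
    using that unfolding W_def by auto
qed

lemma periodic_bound_from_right_cone:
  assumes "c > 0" "R \<ge> 0" "C \<ge> 0" "K \<ge> 0" and per: "\<And>z. G (z + 1) = G z"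
    and bound: "\<And>w. w \<in> right_cone R c \<Longrightarrow> norm (G w) \<le> C * exp (K * norm w)"
  shows "norm (G z) \<le> C * exp (K * (R + 1)) * exp (K * (1 / c + 1) * \<bar>Im z\<bar>)"
proof -
  define k where "k = \<lfloor>R + \<bar>Im z\<bar> / c - Re z\<rfloor> + 1"
  define w where "w = z + of_int k"
  have "Re w = Re z + of_int k"
    by (simp add: w_def)
  then have k: "R + \<bar>Im z\<bar> / c < Re w" "Re w \<le> R + \<bar>Im z\<bar> / c + 1"
    using floor_correct[of "R + \<bar>Im z\<bar> / c - Re z"] unfolding k_def by linarith+
  have "\<bar>Im z\<bar> / c \<ge> 0" "Im w = Im z"
    using assms(1) by (simp_all add: w_def)
  have "w \<in> right_cone R c"
    using add_nat_in_right_cone[OF assms(1,2), of w 0] k(1) \<open>Im w = Im z\<close> by simp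
  have "norm w \<le> \<bar>Re w\<bar> + \<bar>Im w\<bar>"
    by (rule cmod_le)
  also have "\<dots> \<le> (R + 1) + (1 / c + 1) * \<bar>Im z\<bar>"
    using k assms(2) \<open>\<bar>Im z\<bar> / c \<ge> 0\<close> \<open>Im w = Im z\<close> by (simp add: algebra_simps)
  finally have norm_w: "norm w \<le> (R + 1) + (1 / c + 1) * \<bar>Im z\<bar>" .
  have "norm (G z) = norm (G w)"
    using periodic_add_int[of G z k, OF per] by (simp add: w_def)
  also have "\<dots> \<le> C * exp (K * norm w)"
    by (rule bound) fact
  also have "\<dots> \<le> C * exp (K * ((R + 1) + (1 / c + 1) * \<bar>Im z\<bar>))"
    using norm_w assms(3,4) by (intro mult_left_mono) (auto intro: mult_left_mono)
  also have "\<dots> = C * exp (K * (R + 1)) * exp (K * (1 / c + 1) * \<bar>Im z\<bar>)"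
    by (simp add: algebra_simps exp_add)
  finally show ?thesis .
qed

lemma periodic_eq_if_exp_eq:
  fixes G :: "complex \<Rightarrow> 'a"
  assumes "\<And>z. G (z + 1) = G z" "exp w = exp v"
  shows "G (w / (2 * of_real pi * \<i>)) = G (v / (2 * of_real pi * \<i>))"
proof -
  from assms(2) obtain n where "w = v + of_real (of_int (2 * n) * pi) * \<i>"
    unfolding exp_eq by blast
  then have "w / (2 * of_real pi * \<i>) = v / (2 * of_real pi * \<i>) + of_int n"
    by (simp add: field_simps)
  then show ?thesis
    using periodic_add_int[of G, OF assms(1)] by simp
qed

lemma entire_periodic_factor_exp:
  fixes G :: "complex \<Rightarrow> complex"
  assumes hol: "G holomorphic_on UNIV" and per: "\<And>z. G (z + 1) = G z"
  obtains H where "H holomorphic_on - {0}" "\<And>z. G z = H (exp (2 * of_real pi * \<i> * z))"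
proof -
  define c where "c = 2 * of_real pi * \<i>"
  have "c \<noteq> 0" by (simp add: c_def)
  define H where "H \<zeta> = G (Ln \<zeta> / c)" for \<zeta>
  have same_exp: "G (w / c) = G (v / c)" if "exp w = exp v" for w v
    using periodic_eq_if_exp_eq[where G = G, OF per that] by (simp add: c_def)
  have "G z = H (exp (c * z))" for z
    using same_exp[of "Ln (exp (c * z))" "c * z"] \<open>c \<noteq> 0\<close> by (simp add: H_def exp_Ln)
  moreover have "\<exists>H'. DERIV H \<zeta> :> H'" if "\<zeta> \<noteq> 0" for \<zeta>
  proof (cases "\<zeta> \<in> \<real>\<^sub>\<le>\<^sub>0")
    case False
    have "DERIV (\<lambda>\<zeta>. Ln \<zeta> / c) \<zeta> :> inverse \<zeta> / c"
      using False \<open>c \<noteq> 0\<close> by (auto intro!: derivative_eq_intros)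
    then show ?thesis
      using DERIV_chain2 hol holomorphic_on_open[of UNIV G] unfolding H_def by blast
  next
    case True
    text \<open>On the cut of \<open>Ln\<close>, use the branch \<open>Ln (- \<zeta>) + \<i> \<pi>\<close> instead.\<close>
    then have "- \<zeta> \<notin> \<real>\<^sub>\<le>\<^sub>0"
      using that by (auto simp: complex_nonpos_Reals_iff complex_eq_iff)
    then have "DERIV (\<lambda>\<zeta>. (Ln (- \<zeta>) + \<i> * of_real pi) / c) \<zeta> :> - inverse (- \<zeta>) / c"
      using \<open>c \<noteq> 0\<close> by (auto intro!: derivative_eq_intros)
    then obtain H' where deriv: "DERIV (\<lambda>\<zeta>. G ((Ln (- \<zeta>) + \<i> * of_real pi) / c)) \<zeta> :> H'"
      using DERIV_chain2 hol holomorphic_on_open[of UNIV G] by blast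
    have branch: "G ((Ln (- \<eta>) + \<i> * of_real pi) / c) = H \<eta>" if "\<eta> \<in> - {0}" for \<eta>
      unfolding H_def using that by (intro same_exp) (simp add: exp_add exp_Ln exp_pi_i')
    have "DERIV H \<zeta> :> H'"
      using deriv by (rule has_field_derivative_transform_within_open[where S = "- {0}"])
        (use that branch in auto)
    then show ?thesis ..
  qed
  then have "H holomorphic_on - {0}"
    by (subst holomorphic_on_open) auto
  ultimately show thesis
    by (intro that) (simp_all add: c_def)
qed

lemma power_mult_max_inverse_le:
  fixes x :: real
  assumes "x > 0"
  shows "x ^ M * max x (inverse x) ^ M \<le> max (x ^ (2 * M)) 1"
proof (cases "x \<ge> 1")
  case True
  then have "inverse x \<le> x"
    using order.trans[of "inverse x" 1] by (simp add: inverse_le_1_iff)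
  then have "max x (inverse x) = x"
    by (rule max_absorb1)
  then show ?thesis
    by (simp add: mult_2 power_add)
next
  case False
  then have "x \<le> inverse x"
    using assms by (simp add: le_less less_trans[OF _ one_less_inverse])
  then have "max x (inverse x) = inverse x"
    by (rule max_absorb2)
  then show ?thesis
    using assms by (simp add: power_inverse[symmetric] flip: power_mult_distrib)
qed

lemma polynomial_of_power_bound_off_0:
  fixes P :: "complex \<Rightarrow> complex"
  assumes hol: "P holomorphic_on - {0}"
    and bound: "\<And>\<zeta>. \<zeta> \<noteq> 0 \<Longrightarrow> norm (P \<zeta>) \<le> C * max (norm \<zeta> ^ n) 1"
  obtains b where "\<And>\<zeta>. \<zeta> \<noteq> 0 \<Longrightarrow> P \<zeta> = (\<Sum>k\<le>n. b k * \<zeta> ^ k)"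
proof -
  have "\<exists>P'. P' holomorphic_on UNIV \<and> (\<forall>\<zeta>\<in>UNIV - {0}. P' \<zeta> = P \<zeta>)"
  proof (subst holomorphic_on_extend_bounded)
    show "P holomorphic_on UNIV - {0}"
      using hol by (simp add: Compl_eq_Diff_UNIV)
    have "norm (P \<zeta>) \<le> C" if "\<zeta> \<noteq> 0" "norm \<zeta> < 1" for \<zeta>
    proof -
      have "norm \<zeta> ^ n \<le> 1"
        using that by (simp add: power_le_one)
      then show ?thesis
        using bound[OF that(1)] by (simp add: max_absorb2)
    qed
    then have "eventually (\<lambda>\<zeta>. norm (P \<zeta>) \<le> C) (at 0)"
      unfolding eventually_at by (intro exI[of _ 1]) auto
    then show "\<exists>B. eventually (\<lambda>\<zeta>. norm (P \<zeta>) \<le> B) (at 0)" by blast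
  qed auto
  then obtain P' where "P' holomorphic_on UNIV" and P': "\<And>\<zeta>. \<zeta> \<noteq> 0 \<Longrightarrow> P' \<zeta> = P \<zeta>"
    by blast
  have "norm (P' \<zeta>) \<le> C * norm \<zeta> ^ n" if "1 \<le> norm \<zeta>" for \<zeta>
  proof -
    have "\<zeta> \<noteq> 0" "1 \<le> norm \<zeta> ^ n"
      using that by (auto simp: one_le_power)
    then show ?thesis
      using bound[of \<zeta>] P'[of \<zeta>] by (simp add: max_absorb1)
  qed
  then have poly: "P' \<zeta> = (\<Sum>k\<le>n. (deriv ^^ k) P' 0 / fact k * \<zeta> ^ k)" for \<zeta>
    by (rule Liouville_polynomial[OF \<open>P' holomorphic_on UNIV\<close>])
  show thesis
    by (rule that[of "\<lambda>k. (deriv ^^ k) P' 0 / fact k"]) (simp add: P'[symmetric] poly)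
qed

lemma Laurent_polynomial_of_power_bound:
  fixes H :: "complex \<Rightarrow> complex"
  assumes hol: "H holomorphic_on - {0}"
    and bound: "\<And>\<zeta>. \<zeta> \<noteq> 0 \<Longrightarrow> norm (H \<zeta>) \<le> C * max (norm \<zeta>) (inverse (norm \<zeta>)) ^ M"
  obtains b where "\<And>\<zeta>. \<zeta> \<noteq> 0 \<Longrightarrow> H \<zeta> = (\<Sum>k\<le>2*M. b k * \<zeta> powi (int k - int M))"
proof -
  have "C \<ge> 0"
    using order_trans[OF norm_ge_zero bound[of 1]] by simp
  have P_bound: "norm (\<zeta> ^ M * H \<zeta>) \<le> C * max (norm \<zeta> ^ (2 * M)) 1" if "\<zeta> \<noteq> 0" for \<zeta>
  proof -
    have "norm (\<zeta> ^ M * H \<zeta>) \<le> norm \<zeta> ^ M * (C * max (norm \<zeta>) (inverse (norm \<zeta>)) ^ M)"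
      unfolding norm_mult norm_power using bound[OF that] by (rule mult_left_mono) simp
    also have "\<dots> = C * (norm \<zeta> ^ M * max (norm \<zeta>) (inverse (norm \<zeta>)) ^ M)"
      by (simp add: mult.left_commute)
    also have "\<dots> \<le> C * max (norm \<zeta> ^ (2 * M)) 1"
      using that \<open>C \<ge> 0\<close> by (intro mult_left_mono power_mult_max_inverse_le) auto
    finally show ?thesis .
  qed
  have "(\<lambda>\<zeta>. \<zeta> ^ M * H \<zeta>) holomorphic_on - {0}"
    using hol by (intro holomorphic_intros)
  then obtain b where b: "\<And>\<zeta>. \<zeta> \<noteq> 0 \<Longrightarrow> \<zeta> ^ M * H \<zeta> = (\<Sum>k\<le>2*M. b k * \<zeta> ^ k)"
    using polynomial_of_power_bound_off_0[of "\<lambda>\<zeta>. \<zeta> ^ M * H \<zeta>" C "2 * M"] P_bound by blast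
  show thesis
  proof (rule that)
    fix \<zeta> :: complex assume "\<zeta> \<noteq> 0"
    then have "H \<zeta> = (\<zeta> ^ M * H \<zeta>) / \<zeta> ^ M"
      by simp
    also have "\<dots> = (\<Sum>k\<le>2*M. b k * \<zeta> powi (int k - int M))"
      using \<open>\<zeta> \<noteq> 0\<close> by (simp add: b sum_divide_distrib power_int_diff power_int_of_nat)
    finally show "H \<zeta> = (\<Sum>k\<le>2*M. b k * \<zeta> powi (int k - int M))" .
  qed
qed

lemma exp_abs_ln:
  fixes x :: real
  assumes "x > 0"
  shows "exp \<bar>ln x\<bar> = max x (inverse x)"
proof (cases "x \<ge> 1")
  case True
  then have "inverse x \<le> x"
    using order.trans[of "inverse x" 1 x] by (simp add: inverse_le_1_iff)
  then show ?thesis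
    using True assms by (simp add: max_absorb1)
next
  case False
  then have "x \<le> inverse x"
    using assms by (simp add: le_less less_trans[OF _ one_less_inverse])
  moreover have "\<bar>ln x\<bar> = ln (inverse x)"
    using False assms by (simp add: ln_inverse)
  ultimately show ?thesis
    using assms by (simp add: max_absorb2)
qed

lemma entire_periodic_exp_type_Laurent:
  fixes G :: "complex \<Rightarrow> complex"
  assumes "G holomorphic_on UNIV" "\<And>z. G (z + 1) = G z"
    and "C \<ge> 0" "\<And>z. norm (G z) \<le> C * exp (K * \<bar>Im z\<bar>)"
  obtains M b where "\<And>z. G z = (\<Sum>k\<le>2*M. b k * exp (2 * of_real pi * \<i> * z) powi (int k - int M))"
proof -
  obtain H where hol: "H holomorphic_on - {0}" and GH: "\<And>z. G z = H (exp (2 * of_real pi * \<i> * z))"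
    using entire_periodic_factor_exp assms(1,2) by blast
  define M where "M = nat \<lceil>K / (2 * pi)\<rceil>"
  have "K / (2 * pi) \<le> M"
    unfolding M_def by linarith
  have bound: "norm (H \<zeta>) \<le> C * max (norm \<zeta>) (inverse (norm \<zeta>)) ^ M" if "\<zeta> \<noteq> 0" for \<zeta>
  proof -
    define z where "z = Ln \<zeta> / (2 * of_real pi * \<i>)"
    have "exp (2 * of_real pi * \<i> * z) = \<zeta>" and "\<bar>Im z\<bar> = \<bar>ln (norm \<zeta>)\<bar> / (2 * pi)"
      using that by (simp_all add: z_def exp_Ln Im_divide Re_Ln power2_eq_square abs_divide)
    then have "norm (H \<zeta>) \<le> C * exp (K / (2 * pi) * \<bar>ln (norm \<zeta>)\<bar>)"
      using assms(4)[of z] GH[of z] by simp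
    also have "\<dots> \<le> C * exp (real M * \<bar>ln (norm \<zeta>)\<bar>)"
      using mult_right_mono[OF \<open>K / (2 * pi) \<le> M\<close> abs_ge_zero] assms(3)
      by (intro mult_left_mono) auto
    also have "\<dots> = C * max (norm \<zeta>) (inverse (norm \<zeta>)) ^ M"
      using that by (simp add: exp_of_nat_mult exp_abs_ln)
    finally show ?thesis .
  qed
  obtain b where "\<And>\<zeta>. \<zeta> \<noteq> 0 \<Longrightarrow> H \<zeta> = (\<Sum>k\<le>2*M. b k * \<zeta> powi (int k - int M))"
    using Laurent_polynomial_of_power_bound[OF hol bound] by metis
  then show thesis
    using that[of b M] GH by simp
qed

section \<open>Real directions\<close>

lemma cis_eq_pm1_if_sin_eq_0: "sin \<theta> = 0 \<Longrightarrow> cis \<theta> = 1 \<or> cis \<theta> = - 1"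
  using sin_cos_squared_add[of \<theta>] by (auto simp: complex_eq_iff power2_eq_1_iff)

lemma cis_divide_in_sector:
  assumes "r > 0" "w \<in> right_cone (1 / r) \<delta>"
  shows "cis \<theta> / w \<in> sector \<theta> \<delta> r"
proof (rule in_sectorI)
  have "Re w > 1 / r" "\<bar>Im w\<bar> < \<delta> * Re w"
    using assms(2) unfolding right_cone_def by auto
  moreover have "1 / r > 0"
    using assms(1) by simp
  ultimately have "Re w > 0"
    by linarith
  with \<open>\<bar>Im w\<bar> < \<delta> * Re w\<close> have "\<bar>Im w / Re w\<bar> < \<delta>"
    by (simp add: abs_divide pos_divide_less_eq)
  then have "\<bar>Arg w\<bar> < \<delta>"
    using arg_conv_arctan[OF \<open>Re w > 0\<close>] abs_arctan_le[of "Im w / Re w"] by simp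
  moreover have "cis \<theta> / w / cis \<theta> = inverse w"
    using \<open>Re w > 0\<close> by (auto simp: field_simps)
  ultimately show "\<bar>Arg (cis \<theta> / w / cis \<theta>)\<bar> < \<delta>"
    by (simp add: Arg_inverse)
  have "1 / r < norm w"
    using \<open>Re w > 1 / r\<close> complex_Re_le_cmod[of w] by linarith
  then have "1 / norm w < 1 / (1 / r)"
    using \<open>1 / r > 0\<close> assms(1) \<open>Re w > 0\<close>
    by (intro divide_strict_left_mono) (auto simp: zero_less_divide_iff)
  then show "norm (cis \<theta> / w) < r"
    by (simp add: norm_divide)
  show "cis \<theta> / w \<noteq> 0"
    using \<open>Re w > 0\<close> by auto
qed

lemma eventually_cis_divide_in_right_cone:
  assumes "R > 0" "c > 0"
  shows "eventually (\<lambda>t. cis \<theta> / t \<in> right_cone R c) (at_direction \<theta>)"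
proof -
  define e where "e = min (1 / 2) (c / 2)"
  have "e > 0" "1 / (2 * R) > 0"
    using assms by (simp_all add: e_def)
  show ?thesis
    using eventually_at_direction_sgn[OF \<open>e > 0\<close>] eventually_at_direction_norm_less[OF \<open>1 / (2 * R) > 0\<close>]
  proof eventually_elim
    case (elim t)
    define u where "u = cis \<theta> / sgn t"
    have "sgn t \<noteq> 0"
      using elim by (auto simp: sgn_zero_iff)
    then have "u - 1 = (cis \<theta> - sgn t) / sgn t"
      by (simp add: u_def field_simps)
    then have "norm (u - 1) = norm (sgn t - cis \<theta>)"
      using elim by (simp add: norm_divide norm_sgn norm_minus_commute)
    then have "norm (u - 1) < e"
      using elim by simp
    then have "Re u > 1 / 2" "\<bar>Im u\<bar> < c / 2"
      using abs_Re_le_cmod[of "u - 1"] abs_Im_le_cmod[of "u - 1"] unfolding e_def by auto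
    moreover have "c / 2 < c * Re u"
      using \<open>Re u > 1 / 2\<close> assms(2) by simp
    moreover have "norm t > 0" "R < (1 / 2) / norm t"
      using elim assms(1) by (simp_all add: field_simps)
    moreover have "cis \<theta> / t = u / of_real (norm t)"
      using elim by (simp add: u_def sgn_eq)
    ultimately have "R < Re (cis \<theta> / t)" "\<bar>Im (cis \<theta> / t)\<bar> < c * Re (cis \<theta> / t)"
      using divide_strict_right_mono[of "1 / 2" "Re u" "norm t"]
      by (simp_all add: abs_divide divide_strict_right_mono)
    then show ?case
      unfolding right_cone_def by simp
  qed
qed

lemma sector_periodic_imp_right_cone_periodic:
  assumes "sin \<theta> = 0" "r > 0" "\<delta> > 0"
    and per: "\<And>t. t \<in> sector \<theta> \<delta> r \<Longrightarrow> g (t / (1 + t)) = g t"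
    and w: "w \<in> right_cone (1 / r) \<delta>"
  shows "g (cis \<theta> / (w + 1)) = g (cis \<theta> / w)"
proof -
  have "Re w > 0"
    using w \<open>r > 0\<close> less_trans[of 0 "1 / r" "Re w"] by (simp add: right_cone_def)
  then have "w \<noteq> 0" "w + 1 \<noteq> 0"
    by (auto simp: complex_eq_iff)
  from cis_eq_pm1_if_sin_eq_0[OF assms(1)] show ?thesis
  proof
    assume "cis \<theta> = 1"
    then have "(cis \<theta> / w) / (1 + cis \<theta> / w) = cis \<theta> / (w + 1)"
      using \<open>w \<noteq> 0\<close> \<open>w + 1 \<noteq> 0\<close> by (simp add: field_simps)
    then show ?thesis
      using per[OF cis_divide_in_sector[OF \<open>r > 0\<close> w]] by simp
  next
    assume "cis \<theta> = - 1"
    then have "(cis \<theta> / (w + 1)) / (1 + cis \<theta> / (w + 1)) = cis \<theta> / w"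
      using \<open>w \<noteq> 0\<close> \<open>w + 1 \<noteq> 0\<close> by (simp add: field_simps)
    moreover have "w + 1 \<in> right_cone (1 / r) \<delta>"
      using right_cone_add_nat[OF less_imp_le[OF \<open>\<delta> > 0\<close>] w, of 1] by simp
    ultimately show ?thesis
      using per[OF cis_divide_in_sector[OF \<open>r > 0\<close>]] by metis
  qed
qed

lemma periodic_germ_real_direction_on_right_cone:
  assumes "sin \<theta> = 0" "periodic_germ \<theta> g" "exp_growth_germ \<theta> g"
  obtains R c C K where "R > 0" "c > 0" "C \<ge> 0" "K \<ge> 0"
    "(\<lambda>w. g (cis \<theta> / w)) holomorphic_on right_cone R c"
    "\<And>w. w \<in> right_cone R c \<Longrightarrow> g (cis \<theta> / (w + 1)) = g (cis \<theta> / w)"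
    "\<And>w. w \<in> right_cone R c \<Longrightarrow> norm (g (cis \<theta> / w)) \<le> C * exp (K * norm w)"
proof -
  obtain C K where "C \<ge> 0" "K \<ge> 0"
    and bound: "eventually (\<lambda>t. norm (g t) \<le> C * exp (K / norm t)) (at_direction \<theta>)"
    using assms(3) unfolding exp_growth_germ_def by blast
  from assms(2) have holo: "holo_germ \<theta> g"
    and per: "eventually (\<lambda>t. g (t / (1 + t)) = g t) (at_direction \<theta>)"
    unfolding periodic_germ_iff by auto
  obtain \<delta> r where "\<delta> > 0" "r > 0" and hol: "g holomorphic_on sector \<theta> \<delta> r"
    and sector: "\<And>t. t \<in> sector \<theta> \<delta> r \<Longrightarrow> g (t / (1 + t)) = g t \<and> norm (g t) \<le> C * exp (K / norm t)"
    using holo_germ_eventually[OF holo eventually_conj[OF per bound]] by blast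
  define W where "W = right_cone (1 / r) \<delta>"
  have in_sector: "cis \<theta> / w \<in> sector \<theta> \<delta> r" if "w \<in> W" for w
    using cis_divide_in_sector[OF \<open>r > 0\<close>] that unfolding W_def .
  have "(\<lambda>w. cis \<theta> / w) holomorphic_on W"
    using in_sector[of 0] in_sectorD(1)[of 0 \<theta> \<delta> r] by (intro holomorphic_intros) auto
  then have "(\<lambda>w. g (cis \<theta> / w)) holomorphic_on W"
    using holomorphic_on_compose_gen[of "\<lambda>w. cis \<theta> / w" W g, OF _ hol] in_sector
    by (auto simp: o_def)
  moreover have "g (cis \<theta> / (w + 1)) = g (cis \<theta> / w)" if "w \<in> W" for w
    using sector_periodic_imp_right_cone_periodic[OF assms(1) \<open>r > 0\<close> \<open>\<delta> > 0\<close>] sector that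
    unfolding W_def by blast
  moreover have "norm (g (cis \<theta> / w)) \<le> C * exp (K * norm w)" if "w \<in> W" for w
    using sector[OF in_sector[OF that]] by (simp add: norm_divide)
  ultimately show thesis
    using \<open>r > 0\<close> \<open>\<delta> > 0\<close> \<open>C \<ge> 0\<close> \<open>K \<ge> 0\<close> unfolding W_def
    by (intro that[of "1 / r" \<delta> C K]) auto
qed

lemma A_per_le0_germ_const: "A_per_le0_germ \<theta> (\<lambda>_. b)"
  unfolding A_per_le0_germ_def moderate_germ_iff
  by (auto simp: periodic_germ_const holo_germ_if_holomorphic_off_0
      intro!: exI[of _ "norm b"] exI[of _ "0::nat"])

lemma A_per_germ_real_direction:
  assumes "sin \<theta> = 0" "periodic_germ \<theta> g" "exp_growth_germ \<theta> g"
  shows "A_per_germ \<theta> g"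
proof -
  obtain R c C K where "R > 0" "c > 0" "C \<ge> 0" "K \<ge> 0"
    and hol: "(\<lambda>w. g (cis \<theta> / w)) holomorphic_on right_cone R c"
    and per: "\<And>w. w \<in> right_cone R c \<Longrightarrow> g (cis \<theta> / (w + 1)) = g (cis \<theta> / w)"
    and bound: "\<And>w. w \<in> right_cone R c \<Longrightarrow> norm (g (cis \<theta> / w)) \<le> C * exp (K * norm w)"
    using periodic_germ_real_direction_on_right_cone[OF assms] by blast
  obtain G where "G holomorphic_on UNIV" and G_per: "\<And>z. G (z + 1) = G z"
    and G_eq: "\<And>w. w \<in> right_cone R c \<Longrightarrow> G w = g (cis \<theta> / w)"
    using periodic_extension_from_right_cone[OF \<open>c > 0\<close> less_imp_le[OF \<open>R > 0\<close>] hol per] by blast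
  have G_bound: "norm (G z) \<le> C * exp (K * (R + 1)) * exp (K * (1 / c + 1) * \<bar>Im z\<bar>)" for z
    using \<open>c > 0\<close> less_imp_le[OF \<open>R > 0\<close>] \<open>C \<ge> 0\<close> \<open>K \<ge> 0\<close> G_per
    by (rule periodic_bound_from_right_cone) (simp add: G_eq bound)
  have "C * exp (K * (R + 1)) \<ge> 0"
    using \<open>C \<ge> 0\<close> by simp
  then obtain M b where Laurent:
      "\<And>z. G z = (\<Sum>k\<le>2*M. b k * exp (2 * of_real pi * \<i> * z) powi (int k - int M))"
    using entire_periodic_exp_type_Laurent[OF \<open>G holomorphic_on UNIV\<close> G_per _ G_bound] by metis
  obtain \<sigma> :: int where \<sigma>: "cis \<theta> = of_int \<sigma>"
    using cis_eq_pm1_if_sin_eq_0[OF assms(1)] by (metis of_int_1 of_int_minus)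
  have "eventually (\<lambda>t. g t = (\<Sum>k<Suc (2*M). u_fun t powi (\<sigma> * (int k - int M)) * b k))
      (at_direction \<theta>)"
    using eventually_cis_divide_in_right_cone[OF \<open>R > 0\<close> \<open>c > 0\<close>]
  proof eventually_elim
    case (elim t)
    have "exp (2 * of_real pi * \<i> * (cis \<theta> / t)) = u_fun t powi \<sigma>"
      unfolding u_fun_power_int \<sigma> by (simp add: mult_ac)
    then have "G (cis \<theta> / t) = (\<Sum>k<Suc (2*M). u_fun t powi (\<sigma> * (int k - int M)) * b k)"
      unfolding Laurent lessThan_Suc_atMost by (simp add: power_int_mult mult.commute)
    moreover have "cis \<theta> / (cis \<theta> / t) = t"
      by simp
    ultimately show ?case
      using G_eq[OF elim] by simp
  qed
  then show ?thesis
    unfolding A_per_germ_def germ_eq_iff_eventually using A_per_le0_germ_const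
    by (intro exI[of _ "Suc (2 * M)"] exI[of _ "\<lambda>k. \<sigma> * (int k - int M)"] exI[of _ "\<lambda>k _. b k"]) auto
qed

lemma A_per_germ_if_periodic_exp_growth:
  "periodic_germ \<theta> g \<Longrightarrow> exp_growth_germ \<theta> g \<Longrightarrow> A_per_germ \<theta> g"
  using A_per_germ_real_direction A_per_germ_nonreal_direction by blast

theorem theorem4p13:
  fixes \<theta> :: real and f :: "complex \<Rightarrow> complex"
  shows "Per_germ \<theta> f \<longleftrightarrow> A_per_germ \<theta> f"
proof
  assume "Per_germ \<theta> f"
  then obtain k :: nat and a g where terms: "\<forall>i<k. index_germ \<theta> (a i) \<and> H0DR_le_germ \<theta> (a i) (g i)"
    and f: "germ_eq \<theta> f (\<lambda>t. \<Sum>i<k. g i t)"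
    unfolding Per_germ_def by blast
  have "periodic_germ \<theta> (\<lambda>t. \<Sum>i<k. g i t)"
    using terms by (intro periodic_germ_sum) (simp add: H0DR_le_germ_def)
  moreover have "exp_growth_germ \<theta> (\<lambda>t. \<Sum>i<k. g i t)"
    using terms by (intro exp_growth_germ_sum) (blast intro: H0DR_le_germ_imp_exp_growth_germ)
  ultimately have "A_per_germ \<theta> (\<lambda>t. \<Sum>i<k. g i t)"
    by (rule A_per_germ_if_periodic_exp_growth)
  with f show "A_per_germ \<theta> f"
    unfolding germ_eq_iff_eventually by (rule A_per_germ_cong)
qed (rule A_per_germ_imp_Per_germ)

end
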